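(* Let $k>0$ and consider the system of ODEs, in cylindrical coordinates $(r,\theta,z)$ on $\mathbb{R}^3$ with momenta $p_R,p_S$, \[ \dot r = p_R,\quad \dot\theta = \frac{p_S}{r^2},\quad \dot z = \frac{p_S}{2},\quad \dot p_R = \frac{p_S^2}{r^3} - \frac{2kr^3}{(r^4+16z^2)^{3/2}},\quad \dot p_S = -\frac{8kr^2 z}{(r^4+16z^2)^{3/2}}, \] with first integrals $H = \frac12\big(p_R^2+\frac{p_S^2}{r^2}\big) - \frac{k}{\sqrt{r^4+16z^2}}$ and $F_3 = (2zp_R-rp_S)^2 + 4z^2\big(\frac{p_S^2}{r^2}+\frac{2k}{\sqrt{r^4+16z^2}}\big)$. Suppose $J := \sqrt{k^2+2HF_3} = 0$ and set $z_0 = \frac{k}{4|H|}$. Then the trajectories of non-stationary solutions are curves monotone in $z$ and in $\theta$ which, parametrized by $z$, have the form \[ r(z) = \Big(2\,\frac{z_0^2-z^2}{z_0}\Big)^{1/2},\qquad \theta(z) = \frac12\log\frac{z_0+z}{z_0-z} + \theta(0),\qquad |z|\le z_0. \] These solutions connect the stationary points $(r,z)=(0,\pm z_0)$ and take infinite time to approach them, i.e. $t(z)\to\pm\infty$ as $z\to\pm z_0$.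
   Context: The system describes nonholonomic motion on the Heisenberg group in the potential $-k/\sqrt{r^4+16z^2}$ in cylindrical coordinates $x=r\cos\theta$, $y=r\sin\theta$. $H$ and $F_3$ are constant along solutions, $F_3\ge0$, and $k^2+2HF_3\ge 0$. *)

theory Defs
  imports "HOL-Analysis.Analysis"
begin

definition Hf :: "real \<Rightarrow> real \<Rightarrow> real \<Rightarrow> real \<Rightarrow> real \<Rightarrow> real" where
  "Hf k r z pR pS = (pR^2 + pS^2 / r^2) / 2 - k / sqrt (r^4 + 16 * z^2)"

definition F3f :: "real \<Rightarrow> real \<Rightarrow> real \<Rightarrow> real \<Rightarrow> real \<Rightarrow> real" where
  "F3f k r z pR pS = (2 * z * pR - r * pS)^2
      + 4 * z^2 * (pS^2 / r^2 + 2 * k / sqrt (r^4 + 16 * z^2))"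

text \<open>A solution of the ODE system on the set I (r > 0, so cylindrical coordinates are valid).\<close>
definition is_solution ::
  "real \<Rightarrow> real set \<Rightarrow> (real \<Rightarrow> real) \<Rightarrow> (real \<Rightarrow> real) \<Rightarrow> (real \<Rightarrow> real)
     \<Rightarrow> (real \<Rightarrow> real) \<Rightarrow> (real \<Rightarrow> real) \<Rightarrow> bool" where
  "is_solution k I r \<theta> z pR pS \<longleftrightarrow>
     (\<forall>t\<in>I. r t > 0
        \<and> (r has_real_derivative pR t) (at t)
        \<and> (\<theta> has_real_derivative pS t / (r t)^2) (at t)
        \<and> (z has_real_derivative pS t / 2) (at t)
        \<and> (pR has_real_derivative
              (pS t)^2 / (r t)^3 - 2 * k * (r t)^3 / ((r t)^4 + 16 * (z t)^2) powr (3/2)) (at t)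
        \<and> (pS has_real_derivative
              - 8 * k * (r t)^2 * z t / ((r t)^4 + 16 * (z t)^2) powr (3/2)) (at t))"

definition maximal_solution ::
  "real \<Rightarrow> real set \<Rightarrow> (real \<Rightarrow> real) \<Rightarrow> (real \<Rightarrow> real) \<Rightarrow> (real \<Rightarrow> real)
     \<Rightarrow> (real \<Rightarrow> real) \<Rightarrow> (real \<Rightarrow> real) \<Rightarrow> bool" where
  "maximal_solution k I r \<theta> z pR pS \<longleftrightarrow>
     is_interval I \<and> open I \<and> I \<noteq> {} \<and> is_solution k I r \<theta> z pR pS \<and>
     (\<forall>J r' \<theta>' z' pR' pS'. is_interval J \<and> open J \<and> I \<subseteq> J
        \<and> is_solution k J r' \<theta>' z' pR' pS'
        \<and> (\<forall>t\<in>I. r' t = r t \<and> \<theta>' t = \<theta> t \<and> z' t = z t \<and> pR' t = pR t \<and> pS' t = pS t)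
        \<longrightarrow> J = I)"

end

theory Submission
  imports Defs
begin

(* Write b = p_S/r and s = sqrt (r^4 + 16 z^2). Then k^2 + 2 H F_3 is the sum of the squares of
   k r^2/s + b (4 z p_R - r^2 b) and 2 z (p_R^2 - b^2) - r^2 p_R b, so on J = 0 both vanish.
   Solving these two equations gives H < 0 and r^2 + s = 4 z0 with z0 = k/(4|H|); hence
   r^2 = 2 (z0^2 - z^2)/z0, and p_S, p_R are explicit functions of z and of the sign of p_S.
   As H and F_3 are first integrals and p_S never vanishes, a solution stays on this curve with a
   fixed sign e of p_S, and the system reduces to z' = p_S(z)/2. In the phase
   phi = artanh (z/z0) this means that theta - phi is constant and that
   2 phi - tanh phi = e sqrt k t/(2 z0) + c. Because phi |-> 2 phi - tanh phi is an increasing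
   bijection of the line, these formulas define a solution for all times, so by maximality the
   solution is global; monotonicity and the limits z -> +-z0 follow from those of tanh. *)

lemma powr_three_halves: "(x::real) > 0 \<Longrightarrow> x powr (3/2) = sqrt x ^ 3"
  by (simp add: powr_half_sqrt[symmetric] powr_realpow[symmetric] powr_powr)

lemma interval_deriv_zero_eq:
  fixes f :: "real \<Rightarrow> real"
  assumes "is_interval I" "\<And>t. t \<in> I \<Longrightarrow> (f has_real_derivative 0) (at t)" "s \<in> I" "t \<in> I"
  shows "f t = f s"
proof -
  have "convex I" using assms(1) by (simp add: is_interval_convex)
  then obtain c where "\<forall>x\<in>I. f x = c"
    using has_field_derivative_zero_constant[of I f] assms(2) has_field_derivative_at_within by blast
  with assms(3,4) show ?thesis by simp
qed

lemma continuous_nonvanishing_sgn_eq: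
  fixes p :: "'a::topological_space \<Rightarrow> real"
  assumes "connected S" "continuous_on S p" "\<forall>x\<in>S. p x \<noteq> 0" "s \<in> S" "t \<in> S"
  shows "sgn (p t) = sgn (p s)"
proof (rule ccontr)
  assume "sgn (p t) \<noteq> sgn (p s)"
  then have "min (p s) (p t) \<le> 0 \<and> 0 \<le> max (p s) (p t)" by (auto simp: sgn_if split: if_splits)
  moreover have "connected (p ` S)" using assms(1,2) by (rule connected_continuous_image[rotated])
  moreover have "min (p s) (p t) \<in> p ` S" "max (p s) (p t) \<in> p ` S"
    using assms(4,5) by (auto simp: min_def max_def)
  ultimately have "0 \<in> p ` S" using connected_contains_Icc by fastforce
  then show False using assms(3) by auto
qed

lemma filterlim_at_top_linear_lower_bound:
  fixes f :: "real \<Rightarrow> real"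
  assumes "a > 0" "\<And>t. a * t + b \<le> f t"
  shows "filterlim f at_top at_top"
  unfolding filterlim_at_top eventually_at_top_linorder
proof (intro allI exI allI impI)
  fix Z t :: real assume "(Z - b) / a \<le> t"
  then have "Z - b \<le> a * t" using \<open>a > 0\<close> by (simp add: pos_divide_le_eq mult.commute)
  then show "Z \<le> f t" using assms(2)[of t] by linarith
qed

lemma filterlim_at_bot_linear_upper_bound:
  fixes f :: "real \<Rightarrow> real"
  assumes "a > 0" "\<And>t. f t \<le> a * t + b"
  shows "filterlim f at_bot at_bot"
  unfolding filterlim_at_bot eventually_at_bot_linorder
proof (intro allI exI allI impI)
  fix Z t :: real assume "t \<le> (Z - b) / a"
  then have "a * t \<le> Z - b" using \<open>a > 0\<close> by (simp add: pos_le_divide_eq mult.commute)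
  then show "f t \<le> Z" using assms(2)[of t] by linarith
qed

lemma tanh_artanh_real:
  assumes "\<bar>y\<bar> < (1::real)"
  shows "tanh (artanh y) = y"
proof -
  have "1 + y > 0" "1 - y > 0" using assms by auto
  then have "- 2 * artanh y = ln ((1 - y) / (1 + y))"
    by (simp add: artanh_def ln_div)
  then have E: "exp (- 2 * artanh y) = (1 - y) / (1 + y)"
    using \<open>1 + y > 0\<close> \<open>1 - y > 0\<close> by simp
  show ?thesis
    unfolding tanh_real_altdef E using \<open>1 + y > 0\<close> \<open>1 - y > 0\<close> by (simp add: field_simps)
qed

lemma artanh_div_eq_ln:
  assumes "\<bar>z\<bar> < (z0::real)"
  shows "artanh (z / z0) = ln ((z0 + z) / (z0 - z)) / 2"
proof -
  have "z0 > 0" "z0 - z > 0" using assms by linarith+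
  then have "(1 + z / z0) / (1 - z / z0) = (z0 + z) / (z0 - z)" by (simp add: field_simps)
  then show ?thesis by (simp add: artanh_def)
qed

(* k^2 + 2 H F_3 with a = p_R, b = p_S/r and u = 1/sqrt (r^4 + 16 z^2), for which the
   last term vanishes. *)
lemma J_sum_of_squares:
  fixes k r z a b u :: real
  shows "k^2 + 2*((a^2+b^2)/2 - k*u) * ((2*z*a - r^2*b)^2 + 4*z^2*(b^2 + 2*k*u))
    = (k*r^2*u + b*(4*z*a - r^2*b))^2 + (2*z*(a^2-b^2) - r^2*a*b)^2
      + k^2*(1 - (r^4 + 16*z^2)*u^2)"
  by (simp add: field_simps power2_eq_square power4_eq_xxxx)

lemma zero_J_momenta:
  fixes k r z s a b :: real
  assumes "k > 0" "r > 0" "s > 0" and s2: "s^2 = r^4 + 16*z^2"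
    and eq1: "k*r^2/s + b*(4*z*a - r^2*b) = 0" and eq2: "2*z*(a^2-b^2) - r^2*a*b = 0"
  shows "b^2 = k*r^2/s^2" and "a*(r^2+s) = -4*z*b"
proof -
  have kr: "k*r^2/s > 0" using assms by simp
  have "(4*z*a - (r^2+s)*b)*(4*z*a - (r^2-s)*b) = 8*z*(2*z*(a^2-b^2) - r^2*a*b)"
    using s2 by (simp add: algebra_simps power2_eq_square power4_eq_xxxx)
  moreover have "4*z*a \<noteq> (r^2+s)*b"
  proof
    assume "4*z*a = (r^2+s)*b"
    then have "k*r^2/s + s*b^2 = 0" using eq1 by (simp add: algebra_simps power2_eq_square)
    with kr \<open>s > 0\<close> show False by (smt (verit) zero_le_mult_iff zero_le_power2)
  qed
  ultimately have root: "4*z*a = (r^2-s)*b" using eq2 by simp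
  have "k*r^2/s = b*(r^2*b - 4*z*a)" using eq1 by (simp add: algebra_simps)
  also have "\<dots> = s*b^2" unfolding root by (simp add: algebra_simps power2_eq_square)
  finally show "b^2 = k*r^2/s^2" using \<open>s > 0\<close> by (simp add: field_simps power2_eq_square)
  show "a*(r^2+s) = -4*z*b"
  proof (cases "z = 0")
    case True
    have "b \<noteq> 0" using eq1 kr by auto
    then show ?thesis using True eq2 \<open>r > 0\<close> by simp
  next
    case False
    have "4*z*(a*(r^2+s)) = (4*z*a)*(r^2+s)" by (simp add: algebra_simps)
    also have "\<dots> = (r^4 - s^2)*b"
      unfolding root by (simp add: algebra_simps power2_eq_square power4_eq_xxxx)
    also have "\<dots> = 4*z*(-4*z*b)" using s2 by (simp add: algebra_simps power2_eq_square)
    finally show ?thesis using False by (metis mult_left_cancel mult_eq_0_iff zero_neq_numeral)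
  qed
qed

lemma zero_J_energy:
  fixes k r z s a b :: real
  assumes "r > 0" "s > 0" "s^2 = r^4 + 16*z^2"
    and b2: "b^2 = k*r^2/s^2" and a: "a*(r^2+s) = -4*z*b"
  shows "(a^2+b^2)/2 - k/s = -k/(r^2+s)"
proof -
  have rs: "r^2 + s > 0" using assms by (simp add: add_pos_pos)
  have "a^2*(r^2+s)^2 = 16*z^2*b^2"
    using arg_cong[OF a, of "\<lambda>x. x^2"] by (simp add: power_mult_distrib)
  also have "\<dots> = (s-r^2)*(r^2+s)*b^2"
    using assms(3) by (simp add: algebra_simps power2_eq_square power4_eq_xxxx)
  finally have "(r^2+s) * (a^2*(r^2+s)) = (r^2+s) * ((s-r^2)*b^2)"
    by (simp add: algebra_simps power2_eq_square)
  then have "a^2*(r^2+s) = (s-r^2)*b^2" using rs by (subst (asm) mult_left_cancel) auto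
  then have "a^2 = (s-r^2)*b^2/(r^2+s)" using rs by (simp add: field_simps)
  then have "a^2 + b^2 = 2 * s * b^2 / (r^2+s)" using rs by (simp add: field_simps)
  also have "\<dots> = 2*k*r^2/(s*(r^2+s))"
    unfolding b2 using rs \<open>s > 0\<close> by (simp add: field_simps power2_eq_square)
  also have "\<dots> = 2*(k/s - k/(r^2+s))" using rs \<open>s > 0\<close> by (simp add: field_simps)
  finally show ?thesis unfolding minus_divide_left[symmetric] by argo
qed

lemma zero_J_z0_relations:
  fixes r z s z0 :: real
  assumes "r > 0" "s > 0" and s2: "s^2 = r^4 + 16*z^2" and z0: "4*z0 = r^2 + s"
  shows "\<bar>z\<bar> < z0" "r^2 = 2*(z0^2 - z^2)/z0" "s = 2*(z0^2 + z^2)/z0"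
proof -
  have "z0 > 0" using assms by (smt (verit) zero_less_power)
  have "(4*z0 - r^2)^2 = r^4 + 16*z^2" using s2 z0 by simp
  then have "16*z0^2 - 8*z0*r^2 = 16*z^2" by (simp add: algebra_simps power2_eq_square power4_eq_xxxx)
  then show r2: "r^2 = 2*(z0^2 - z^2)/z0" using \<open>z0 > 0\<close> by (simp add: field_simps)
  have "s = 4*z0 - r^2" using z0 by simp
  also have "\<dots> = 2*(z0^2 + z^2)/z0" unfolding r2 using \<open>z0 > 0\<close> by (simp add: field_simps power2_eq_square)
  finally show "s = 2*(z0^2 + z^2)/z0" .
  have "z^2 < z0^2" using r2 \<open>z0 > 0\<close> \<open>r > 0\<close> by (smt (verit) divide_nonpos_pos zero_less_power)
  then show "\<bar>z\<bar> < z0" using \<open>z0 > 0\<close> abs_le_square_iff[of z0 z] by auto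
qed

lemma zero_J_squares_vanish:
  fixes k r z a p :: real
  assumes "r > 0" and J: "k^2 + 2 * Hf k r z a p * F3f k r z a p = 0"
  defines "s \<equiv> sqrt (r^4 + 16*z^2)" and "b \<equiv> p / r"
  shows "Hf k r z a p = (a^2 + b^2)/2 - k/s"
    and "k*r^2/s + b*(4*z*a - r^2*b) = 0" "2*z*(a^2 - b^2) - r^2*a*b = 0"
proof -
  have q: "r^4 + 16*z^2 > 0" using \<open>r > 0\<close> by (simp add: add_pos_nonneg)
  show H: "Hf k r z a p = (a^2 + b^2)/2 - k/s"
    using \<open>r > 0\<close> by (simp add: Hf_def b_def s_def power_divide)
  have "F3f k r z a p = (2*z*a - r^2*b)^2 + 4*z^2*(b^2 + 2*k*(1/s))"
    using \<open>r > 0\<close> by (simp add: F3f_def b_def s_def power_divide power2_eq_square)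
  moreover have "1 - (r^4 + 16*z^2)*(1/s)^2 = 0" using q by (simp add: s_def power_divide)
  ultimately have "(k*r^2*(1/s) + b*(4*z*a - r^2*b))^2 + (2*z*(a^2 - b^2) - r^2*a*b)^2 = 0"
    using J J_sum_of_squares[of k a b "1/s" z r] H by simp
  then show "k*r^2/s + b*(4*z*a - r^2*b) = 0" "2*z*(a^2 - b^2) - r^2*a*b = 0"
    by (simp_all add: sum_power2_eq_zero_iff)
qed

lemma zero_J_state:
  fixes k r z a p :: real
  assumes "k > 0" "r > 0" and J: "k^2 + 2 * Hf k r z a p * F3f k r z a p = 0"
  defines "z0 \<equiv> - k / (4 * Hf k r z a p)"
  shows "Hf k r z a p < 0" "\<bar>z\<bar> < z0" "r^2 = 2*(z0^2 - z^2)/z0"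
    "p^2 = k * ((z0^2 - z^2)/(z0^2 + z^2))^2" "a = - z * p / (z0 * r)"
proof -
  define s b where "s = sqrt (r^4 + 16*z^2)" and "b = p / r"
  have "s > 0" and s2: "s^2 = r^4 + 16*z^2" using \<open>r > 0\<close> by (simp_all add: s_def add_pos_nonneg)
  note squares = zero_J_squares_vanish[OF \<open>r > 0\<close> J, folded s_def b_def]
  note momenta = zero_J_momenta[OF \<open>k > 0\<close> \<open>r > 0\<close> \<open>s > 0\<close> s2 squares(2,3)]
  have H: "Hf k r z a p = - k/(r^2 + s)"
    using zero_J_energy[OF \<open>r > 0\<close> \<open>s > 0\<close> s2 momenta] squares(1) by simp
  moreover have rs: "r^2 + s > 0" using \<open>s > 0\<close> by (simp add: add_nonneg_pos)
  ultimately show "Hf k r z a p < 0" using \<open>k > 0\<close> by simp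
  have "4*z0 = r^2 + s" using rs \<open>k > 0\<close> by (simp add: z0_def H)
  note rel = zero_J_z0_relations[OF \<open>r > 0\<close> \<open>s > 0\<close> s2 this]
  show "\<bar>z\<bar> < z0" "r^2 = 2*(z0^2 - z^2)/z0" using rel by simp_all
  have "z0 > 0" "z0^2 + z^2 > 0" using rel(1) by (auto simp: add_pos_nonneg)
  have "p^2 = k*(r^2/s)^2"
    using momenta(1) \<open>r > 0\<close> by (simp add: b_def power_divide field_simps power2_eq_square)
  also have "r^2/s = (z0^2 - z^2)/(z0^2 + z^2)"
    using \<open>z0 > 0\<close> \<open>z0^2 + z^2 > 0\<close> unfolding rel(2,3)
    by (simp add: divide_simps) (simp add: algebra_simps)
  finally show "p^2 = k * ((z0^2 - z^2)/(z0^2 + z^2))^2" .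
  have "a*(4*z0) = -4*z*b" using momenta(2) \<open>4*z0 = r^2 + s\<close> by simp
  then show "a = - z * p / (z0 * r)" using \<open>z0 > 0\<close> \<open>r > 0\<close> by (simp add: b_def field_simps)
qed

lemma has_real_derivative_sqrt_r4_16z2:
  fixes r z :: "real \<Rightarrow> real"
  assumes "(r has_real_derivative a) (at t)" "(z has_real_derivative p / 2) (at t)" "r t > 0"
  shows "((\<lambda>t. sqrt ((r t)^4 + 16 * (z t)^2)) has_real_derivative
     (4*(r t)^3*a + 16*z t*p) / (2 * sqrt ((r t)^4 + 16 * (z t)^2))) (at t)"
proof -
  have q: "(r t)^4 + 16 * (z t)^2 > 0" using assms(3) by (simp add: add_pos_nonneg)
  have "((\<lambda>t. (r t)^4 + 16 * (z t)^2) has_real_derivative 4*(r t)^3*a + 16*z t*p) (at t)"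
    by (rule derivative_eq_intros assms refl)+ (simp add: algebra_simps)
  from DERIV_chain2[OF DERIV_real_sqrt[OF q] this] show ?thesis
    by (rule DERIV_cong) (simp add: field_simps)
qed

lemma is_solutionD:
  assumes "is_solution k I r \<theta> z pR pS" "t \<in> I"
  shows "r t > 0" "(r has_real_derivative pR t) (at t)"
    "(\<theta> has_real_derivative pS t / (r t)^2) (at t)"
    "(z has_real_derivative pS t / 2) (at t)"
    "(pR has_real_derivative
        (pS t)^2 / (r t)^3 - 2 * k * (r t)^3 / (sqrt ((r t)^4 + 16 * (z t)^2))^3) (at t)"
    "(pS has_real_derivative
        - 8 * k * (r t)^2 * z t / (sqrt ((r t)^4 + 16 * (z t)^2))^3) (at t)"
proof -
  have sol: "r t > 0 \<and> (r has_real_derivative pR t) (at t)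
      \<and> (\<theta> has_real_derivative pS t / (r t)^2) (at t)
      \<and> (z has_real_derivative pS t / 2) (at t)
      \<and> (pR has_real_derivative
           (pS t)^2 / (r t)^3 - 2 * k * (r t)^3 / ((r t)^4 + 16 * (z t)^2) powr (3/2)) (at t)
      \<and> (pS has_real_derivative
           - 8 * k * (r t)^2 * z t / ((r t)^4 + 16 * (z t)^2) powr (3/2)) (at t)"
    using assms unfolding is_solution_def by blast
  then show "r t > 0" by blast
  then have "(r t)^4 + 16 * (z t)^2 > 0" by (simp add: add_pos_nonneg)
  from sol[unfolded powr_three_halves[OF this]]
  show "(r has_real_derivative pR t) (at t)" "(\<theta> has_real_derivative pS t / (r t)^2) (at t)"
    "(z has_real_derivative pS t / 2) (at t)"
    "(pR has_real_derivative
        (pS t)^2 / (r t)^3 - 2 * k * (r t)^3 / (sqrt ((r t)^4 + 16 * (z t)^2))^3) (at t)"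
    "(pS has_real_derivative
        - 8 * k * (r t)^2 * z t / (sqrt ((r t)^4 + 16 * (z t)^2))^3) (at t)"
    by blast+
qed

lemma is_solution_Hf_deriv:
  assumes "is_solution k I r \<theta> z pR pS" "t \<in> I"
  shows "((\<lambda>t. Hf k (r t) (z t) (pR t) (pS t)) has_real_derivative 0) (at t)"
proof -
  note d = is_solutionD[OF assms]
  note dS = has_real_derivative_sqrt_r4_16z2[OF d(2) d(4) d(1)]
  define S where "S = sqrt ((r t)^4 + 16 * (z t)^2)"
  have q: "(r t)^4 + 16 * (z t)^2 > 0" using d(1) by (simp add: add_pos_nonneg)
  then have "S > 0" by (simp add: S_def)
  have side: "(2::real) \<noteq> 0" "(r t)^2 \<noteq> 0" "(r t)^4 + 16 * (z t)^2 \<noteq> 0"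
    "sqrt ((r t)^4 + 16 * (z t)^2) \<noteq> 0"
    using q d(1) by auto
  show ?thesis
    unfolding Hf_def
    apply (rule DERIV_cong)
     apply (rule dS derivative_eq_intros d refl | rule side)+
    apply (simp only: S_def[symmetric])
    using \<open>S > 0\<close> d(1) apply (simp add: field_simps)
    apply (simp add: eval_nat_numeral algebra_simps)
    done
qed

lemma is_solution_F3f_deriv:
  assumes "is_solution k I r \<theta> z pR pS" "t \<in> I"
  shows "((\<lambda>t. F3f k (r t) (z t) (pR t) (pS t)) has_real_derivative 0) (at t)"
proof -
  note d = is_solutionD[OF assms]
  note dS = has_real_derivative_sqrt_r4_16z2[OF d(2) d(4) d(1)]
  define S where "S = sqrt ((r t)^4 + 16 * (z t)^2)"
  have q: "(r t)^4 + 16 * (z t)^2 > 0" using d(1) by (simp add: add_pos_nonneg)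
  then have "S > 0" and S2: "S^2 = (r t)^4 + 16 * (z t)^2" by (simp_all add: S_def)
  have side: "(2::real) \<noteq> 0" "(r t)^2 \<noteq> 0" "(r t)^4 + 16 * (z t)^2 \<noteq> 0"
    "sqrt ((r t)^4 + 16 * (z t)^2) \<noteq> 0"
    using q d(1) by auto
  have "((\<lambda>t. F3f k (r t) (z t) (pR t) (pS t)) has_real_derivative
      8*k*z t*pS t/S - 8*k*z t*pS t*((r t)^4 + 16 * (z t)^2)/S^3) (at t)"
    unfolding F3f_def
    apply (rule DERIV_cong)
     apply (rule dS derivative_eq_intros d refl | rule side)+
    apply (simp only: S_def[symmetric])
    using \<open>S > 0\<close> d(1) apply (simp add: field_simps)
    apply (simp add: eval_nat_numeral algebra_simps)
    done
  moreover have "S^3 = S * ((r t)^4 + 16 * (z t)^2)" using S2 by (simp add: power3_eq_cube power2_eq_square)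
  ultimately show ?thesis using \<open>S > 0\<close> q by simp
qed

lemma is_solution_first_integrals:
  assumes "is_solution k I r \<theta> z pR pS" "is_interval I" "t0 \<in> I" "t \<in> I"
  shows "Hf k (r t) (z t) (pR t) (pS t) = Hf k (r t0) (z t0) (pR t0) (pS t0)"
    and "F3f k (r t) (z t) (pR t) (pS t) = F3f k (r t0) (z t0) (pR t0) (pS t0)"
  using interval_deriv_zero_eq[where f = "\<lambda>t. Hf k (r t) (z t) (pR t) (pS t)"]
    interval_deriv_zero_eq[where f = "\<lambda>t. F3f k (r t) (z t) (pR t) (pS t)"]
    is_solution_Hf_deriv[OF assms(1)] is_solution_F3f_deriv[OF assms(1)] assms(2-4)
  by blast+

(* The curve through all states with J = 0, where z0 = k/(4|H|) and e = sgn p_S. *)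
definition curve_r :: "real \<Rightarrow> real \<Rightarrow> real" where
  "curve_r z0 z = sqrt (2 * (z0^2 - z^2) / z0)"

definition curve_pS :: "real \<Rightarrow> real \<Rightarrow> real \<Rightarrow> real \<Rightarrow> real" where
  "curve_pS k z0 e z = e * sqrt k * (z0^2 - z^2) / (z0^2 + z^2)"

definition curve_pR :: "real \<Rightarrow> real \<Rightarrow> real \<Rightarrow> real \<Rightarrow> real" where
  "curve_pR k z0 e z = - e * sqrt k * z * curve_r z0 z / (2 * (z0^2 + z^2))"

lemma curve_r_radicand_pos: "\<bar>z\<bar> < (z0::real) \<Longrightarrow> 2 * (z0^2 - z^2) / z0 > 0"
  using abs_le_square_iff[of z0 z] by auto

lemma curve_r_pos: "\<bar>z\<bar> < z0 \<Longrightarrow> curve_r z0 z > 0"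
  unfolding curve_r_def using curve_r_radicand_pos by simp

lemma curve_r_sq: "\<bar>z\<bar> < z0 \<Longrightarrow> (curve_r z0 z)^2 = 2 * (z0^2 - z^2) / z0"
  unfolding curve_r_def using curve_r_radicand_pos[of z z0] by simp

lemma curve_r_pow4: "\<bar>z\<bar> < z0 \<Longrightarrow> (curve_r z0 z)^4 + 16 * z^2 = (2 * (z0^2 + z^2) / z0)^2"
proof -
  assume "\<bar>z\<bar> < z0"
  then have "(curve_r z0 z)^4 = (2 * (z0^2 - z^2) / z0)^2"
    using curve_r_sq by (metis power2_eq_square power4_eq_xxxx mult.assoc)
  then show ?thesis
    using \<open>\<bar>z\<bar> < z0\<close> by (simp add: field_simps) (simp add: algebra_simps power2_eq_square)
qed

lemma curve_r_deriv:
  assumes z: "\<bar>zf t\<bar> < z0" and dz: "(zf has_real_derivative curve_pS k z0 e (zf t) / 2) (at t)"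
  shows "((\<lambda>t. curve_r z0 (zf t)) has_real_derivative curve_pR k z0 e (zf t)) (at t)"
proof -
  define R B where "R = curve_r z0 (zf t)" and "B = z0^2 + (zf t)^2"
  have "z0 > 0" "R > 0" "B > 0" using z curve_r_pos[OF z] by (auto simp: R_def B_def add_pos_nonneg)
  have A: "z0^2 - (zf t)^2 = z0 * R^2 / 2" using curve_r_sq[OF z] \<open>z0 > 0\<close> by (simp add: R_def)
  have "((\<lambda>t. 2 * (z0^2 - (zf t)^2) / z0) has_real_derivative
      - 4 * zf t * (curve_pS k z0 e (zf t) / 2) / z0) (at t)"
    using \<open>z0 > 0\<close> by (auto intro!: derivative_eq_intros dz)
  from DERIV_chain2[OF DERIV_real_sqrt[OF curve_r_radicand_pos[OF z]] this]
  show ?thesis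
    unfolding curve_r_def[symmetric, of z0 "zf _"] curve_r_def[symmetric, of z0 "zf t"]
  proof (rule DERIV_cong)
    show "inverse (curve_r z0 (zf t)) / 2 * (- 4 * zf t * (curve_pS k z0 e (zf t) / 2) / z0)
        = curve_pR k z0 e (zf t)"
      unfolding curve_pS_def curve_pR_def unfolding R_def[symmetric] B_def[symmetric] A
      using \<open>z0 > 0\<close> \<open>R > 0\<close> \<open>B > 0\<close> by (simp add: field_simps power2_eq_square)
  qed
qed

lemma curve_theta_deriv:
  assumes z: "\<bar>zf t\<bar> < z0" and dz: "(zf has_real_derivative curve_pS k z0 e (zf t) / 2) (at t)"
  shows "((\<lambda>t. c + artanh (zf t / z0)) has_real_derivative
           curve_pS k z0 e (zf t) / (curve_r z0 (zf t))^2) (at t)"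
proof -
  define A B where "A = z0^2 - (zf t)^2" and "B = z0^2 + (zf t)^2"
  have "z0 > 0" "A > 0" "B > 0"
    using z abs_le_square_iff[of z0 "zf t"] by (auto simp: A_def B_def add_pos_nonneg)
  have one_minus: "1 - (zf t / z0)^2 = A / z0^2" using \<open>z0 > 0\<close> by (simp add: A_def field_simps)
  have "(artanh has_real_derivative 1 / (1 - (zf t / z0)^2)) (at (zf t / z0))"
    using z \<open>z0 > 0\<close> by (intro artanh_real_has_field_derivative) (auto simp: field_simps)
  from DERIV_add[OF DERIV_const DERIV_chain2[OF this DERIV_cdivide[OF dz, of z0]]]
  show ?thesis
  proof (rule DERIV_cong)
    show "0 + 1 / (1 - (zf t / z0)^2) * (curve_pS k z0 e (zf t) / 2 / z0)
        = curve_pS k z0 e (zf t) / (curve_r z0 (zf t))^2"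
      unfolding one_minus curve_r_sq[OF z] curve_pS_def A_def[symmetric] B_def[symmetric]
      using \<open>z0 > 0\<close> \<open>A > 0\<close> \<open>B > 0\<close> by (simp add: field_simps power2_eq_square)
  qed
qed

lemma curve_powr_three_halves:
  "\<bar>z\<bar> < z0 \<Longrightarrow> ((curve_r z0 z)^4 + 16 * z^2) powr (3/2) = (2 * (z0^2 + z^2) / z0)^3"
proof -
  assume z: "\<bar>z\<bar> < z0"
  then have "z0 > 0" using abs_ge_zero[of z] by linarith
  define x where "x = 2 * (z0^2 + z^2) / z0"
  have "x > 0" using \<open>z0 > 0\<close> by (simp add: x_def add_pos_nonneg)
  have "(x^2) powr (3/2) = sqrt (x^2) ^ 3" using \<open>x > 0\<close> by (simp add: powr_three_halves)
  also have "\<dots> = x^3" using \<open>x > 0\<close> by simp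
  finally show ?thesis unfolding curve_r_pow4[OF z] x_def .
qed

lemma curve_pS_has_derivative:
  assumes "z0 \<noteq> 0"
  shows "(curve_pS k z0 e has_real_derivative - 4 * e * sqrt k * z0^2 * z / (z0^2 + z^2)^2) (at z)"
proof -
  have "z0^2 + z^2 > 0" using assms by (simp add: add_pos_nonneg)
  then show ?thesis
    unfolding curve_pS_def[abs_def]
    by (auto intro!: derivative_eq_intros simp: field_simps power2_eq_square)
qed

lemma curve_pS_deriv:
  assumes "k > 0" "\<bar>e\<bar> = 1"
    and z: "\<bar>zf t\<bar> < z0" and dz: "(zf has_real_derivative curve_pS k z0 e (zf t) / 2) (at t)"
  shows "((\<lambda>t. curve_pS k z0 e (zf t)) has_real_derivative
           - 8 * k * (curve_r z0 (zf t))^2 * zf t / ((curve_r z0 (zf t))^4 + 16 * (zf t)^2) powr (3/2)) (at t)"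
proof -
  define A B where "A = z0^2 - (zf t)^2" and "B = z0^2 + (zf t)^2"
  have "z0 > 0" "B > 0" using z by (auto simp: B_def add_pos_nonneg)
  then have "z0 \<noteq> 0" by simp
  from DERIV_chain2[OF curve_pS_has_derivative[where k=k and e=e, OF this] dz]
  show ?thesis
  proof (rule DERIV_cong)
    have "e^2 = 1" "sqrt k ^ 2 = k" using assms(1,2) by (auto simp: power2_eq_square abs_if split: if_splits)
    show "- 4 * e * sqrt k * z0^2 * zf t / (z0^2 + (zf t)^2)^2 * (curve_pS k z0 e (zf t) / 2)
        = - 8 * k * (curve_r z0 (zf t))^2 * zf t / ((curve_r z0 (zf t))^4 + 16 * (zf t)^2) powr (3/2)"
      unfolding curve_powr_three_halves[OF z] curve_r_sq[OF z] curve_pS_def A_def[symmetric] B_def[symmetric]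
      using \<open>z0 > 0\<close> \<open>B > 0\<close> \<open>e^2 = 1\<close> \<open>sqrt k ^ 2 = k\<close>
      by (simp add: field_simps) (simp add: algebra_simps power2_eq_square power3_eq_cube)
  qed
qed

lemma curve_pR_deriv:
  assumes "k > 0" "\<bar>e\<bar> = 1"
    and z: "\<bar>zf t\<bar> < z0" and dz: "(zf has_real_derivative curve_pS k z0 e (zf t) / 2) (at t)"
  shows "((\<lambda>t. curve_pR k z0 e (zf t)) has_real_derivative
           (curve_pS k z0 e (zf t))^2 / (curve_r z0 (zf t))^3
           - 2 * k * (curve_r z0 (zf t))^3 / ((curve_r z0 (zf t))^4 + 16 * (zf t)^2) powr (3/2)) (at t)"
proof -
  define R B m where "R = curve_r z0 (zf t)" and "B = z0^2 + (zf t)^2" and "m = sqrt k"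
  have "z0 > 0" "R > 0" "B > 0" using z curve_r_pos[OF z] by (auto simp: R_def B_def add_pos_nonneg)
  have A: "z0^2 - (zf t)^2 = z0 * R^2 / 2" using curve_r_sq[OF z] \<open>z0 > 0\<close> by (simp add: R_def)
  have k: "k = m^2" using \<open>k > 0\<close> by (simp add: m_def)
  have side: "(2::real) * (z0^2 + (zf t)^2) \<noteq> 0" using \<open>B > 0\<close> by (simp add: B_def)
  have "m > 0" using \<open>k > 0\<close> by (simp add: m_def)
  have pw: "(R^4 + 16 * (zf t)^2) powr (3/2) = (2 * B / z0)^3"
    using curve_powr_three_halves[OF z] by (simp add: R_def B_def)
  from \<open>\<bar>e\<bar> = 1\<close> have e: "e = 1 \<or> e = -1" by auto
  show ?thesis
    unfolding curve_pR_def[of k z0 e "zf _"]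
    apply (rule DERIV_cong)
     apply (rule derivative_eq_intros curve_r_deriv[OF z dz] dz refl | rule side)+
    unfolding curve_pS_def curve_pR_def unfolding R_def[symmetric] B_def[symmetric]
    unfolding pw m_def[symmetric] A k
    using \<open>z0 > 0\<close> \<open>R > 0\<close> \<open>B > 0\<close> \<open>m > 0\<close> e
    apply (elim disjE; simp add: field_simps)
    using B_def A by algebra+
qed

lemma curve_is_solution:
  assumes "k > 0" "\<bar>e\<bar> = 1"
    and "\<And>t. t \<in> J \<Longrightarrow> \<bar>zf t\<bar> < z0 \<and> (zf has_real_derivative curve_pS k z0 e (zf t) / 2) (at t)"
  shows "is_solution k J (\<lambda>t. curve_r z0 (zf t)) (\<lambda>t. c + artanh (zf t / z0)) zf
           (\<lambda>t. curve_pR k z0 e (zf t)) (\<lambda>t. curve_pS k z0 e (zf t))"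
  unfolding is_solution_def
  using assms(3) curve_r_pos curve_r_deriv curve_theta_deriv
    curve_pR_deriv[OF assms(1,2)] curve_pS_deriv[OF assms(1,2)] by blast

definition time_of_phase :: "real \<Rightarrow> real" where
  "time_of_phase \<phi> = 2 * \<phi> - tanh \<phi>"

definition phase_of_time :: "real \<Rightarrow> real" where
  "phase_of_time = inv time_of_phase"

lemma time_of_phase_deriv: "(time_of_phase has_real_derivative 1 + (tanh \<phi>)^2) (at \<phi>)"
  unfolding time_of_phase_def[abs_def] by (auto intro!: derivative_eq_intros)

lemma time_of_phase_strict_mono: "strict_mono time_of_phase"
proof (rule strict_monoI)
  fix x y :: real assume "x < y"
  have "1 + (tanh \<phi>)^2 > 0" for \<phi> :: real by (smt (verit) zero_le_power2)
  then show "time_of_phase x < time_of_phase y"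
    using DERIV_pos_imp_increasing[OF \<open>x < y\<close>, of time_of_phase] time_of_phase_deriv by blast
qed

lemma time_of_phase_bounds: "2 * \<phi> - 1 < time_of_phase \<phi>" "time_of_phase \<phi> < 2 * \<phi> + 1"
  using tanh_real_lt_1[of \<phi>] tanh_real_gt_neg1[of \<phi>] by (simp_all add: time_of_phase_def)

lemma time_of_phase_surj: "surj time_of_phase"
proof -
  have "\<exists>\<phi>. time_of_phase \<phi> = s" for s
  proof -
    define a b where "a = (s - 1) / 2" and "b = (s + 1) / 2"
    have "2 * a = s - 1" "2 * b = s + 1" by (simp_all add: a_def b_def)
    then have "time_of_phase a \<le> s" "s \<le> time_of_phase b"
      using time_of_phase_bounds(2)[of a] time_of_phase_bounds(1)[of b] by linarith+
    moreover have "continuous_on {a..b} time_of_phase"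
      using time_of_phase_deriv by (meson DERIV_isCont continuous_at_imp_continuous_on)
    moreover have "a \<le> b" by (simp add: a_def b_def)
    ultimately show ?thesis using IVT'[of time_of_phase a s b] by blast
  qed
  then show ?thesis by (metis surjI)
qed

lemma time_of_phase_of_time [simp]: "time_of_phase (phase_of_time s) = s"
  unfolding phase_of_time_def using time_of_phase_surj by (simp add: surj_f_inv_f)

lemma phase_of_time_of_phase [simp]: "phase_of_time (time_of_phase \<phi>) = \<phi>"
  unfolding phase_of_time_def using time_of_phase_strict_mono strict_mono_imp_inj_on by (metis inv_f_f)

lemma phase_of_time_strict_mono: "strict_mono phase_of_time"
  by (metis strict_monoI strict_mono_less time_of_phase_strict_mono time_of_phase_of_time)

lemma phase_of_time_deriv:
  "(phase_of_time has_real_derivative 1 / (1 + (tanh (phase_of_time s))^2)) (at s)"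
proof -
  have "isCont phase_of_time (time_of_phase (phase_of_time s))"
    by (rule isCont_inverse_function[where d = 1])
      (use time_of_phase_deriv DERIV_isCont in auto)
  then have "isCont phase_of_time s" by simp
  moreover have "1 + (tanh (phase_of_time s))^2 \<noteq> 0" by (smt (verit) zero_le_power2)
  ultimately show ?thesis
    using DERIV_inverse_function[where a = "s - 1" and b = "s + 1", OF time_of_phase_deriv]
    by (simp add: divide_inverse)
qed

lemma phase_of_time_bounds: "s - 1 < 2 * phase_of_time s" "2 * phase_of_time s < s + 1"
  using time_of_phase_bounds[of "phase_of_time s"] by simp_all

lemma phase_of_time_0 [simp]: "phase_of_time 0 = 0"
  using phase_of_time_of_phase[of 0] by (simp add: time_of_phase_def)

(* The phase artanh (z/z0) of a solution on the curve; it obeys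
   time_of_phase phase = e sqrt k t/(2 z0) + c. *)
definition curve_phase :: "real \<Rightarrow> real \<Rightarrow> real \<Rightarrow> real \<Rightarrow> real \<Rightarrow> real" where
  "curve_phase k z0 e c t = phase_of_time (e * sqrt k / (2 * z0) * t + c)"

lemma curve_phase_deriv:
  "(curve_phase k z0 e c has_real_derivative
     e * sqrt k / (2 * z0) / (1 + (tanh (curve_phase k z0 e c t))^2)) (at t)"
proof -
  have "((\<lambda>t. e * sqrt k / (2 * z0) * t + c) has_real_derivative e * sqrt k / (2 * z0)) (at t)"
    using DERIV_add[OF DERIV_cmult_Id[of "e * sqrt k / (2 * z0)"] DERIV_const[of c]] by simp
  from DERIV_chain2[OF phase_of_time_deriv this] show ?thesis
    unfolding curve_phase_def[abs_def] by (simp add: ac_simps)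
qed

lemma curve_phase_height_deriv:
  assumes "z0 \<noteq> 0"
  shows "((\<lambda>t. z0 * tanh (curve_phase k z0 e c t)) has_real_derivative
           curve_pS k z0 e (z0 * tanh (curve_phase k z0 e c t)) / 2) (at t)"
proof -
  define T where "T = tanh (curve_phase k z0 e c t)"
  have "1 + T^2 > 0" by (smt (verit) zero_le_power2)
  have "((\<lambda>t. z0 * tanh (curve_phase k z0 e c t)) has_real_derivative
      z0 * ((1 - T^2) * (e * sqrt k / (2 * z0) / (1 + T^2)))) (at t)"
    unfolding T_def by (intro DERIV_cmult has_field_derivative_tanh curve_phase_deriv) simp
  then show ?thesis
  proof (rule DERIV_cong)
    have eqs: "z0^2 - (z0 * T)^2 = z0^2 * (1 - T^2)" "z0^2 + (z0 * T)^2 = z0^2 * (1 + T^2)"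
      by (simp_all add: algebra_simps power_mult_distrib)
    have "z0 * (M * (e * sqrt k / (2 * z0) / N)) = e * sqrt k * (z0^2 * M) / (z0^2 * N) / 2"
      if "N > 0" for M N :: real
      using assms that by (simp add: field_simps power2_eq_square)
    from this[OF \<open>1 + T^2 > 0\<close>]
    show "z0 * ((1 - T^2) * (e * sqrt k / (2 * z0) / (1 + T^2)))
        = curve_pS k z0 e (z0 * tanh (curve_phase k z0 e c t)) / 2"
      unfolding T_def[symmetric] curve_pS_def eqs .
  qed
qed

lemma curve_phase_is_solution:
  fixes c \<theta>c :: real
  assumes "k > 0" "\<bar>e\<bar> = 1" "z0 > 0"
  defines "\<phi> \<equiv> curve_phase k z0 e c"
  shows "is_solution k UNIV (\<lambda>t. curve_r z0 (z0 * tanh (\<phi> t))) (\<lambda>t. \<theta>c + \<phi> t)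
           (\<lambda>t. z0 * tanh (\<phi> t))
           (\<lambda>t. curve_pR k z0 e (z0 * tanh (\<phi> t))) (\<lambda>t. curve_pS k z0 e (z0 * tanh (\<phi> t)))"
proof -
  have "(\<lambda>t. \<theta>c + artanh (z0 * tanh (\<phi> t) / z0)) = (\<lambda>t. \<theta>c + \<phi> t)"
    using \<open>z0 > 0\<close> by (simp add: artanh_tanh_real)
  moreover have "\<bar>z0 * tanh (\<phi> t)\<bar> < z0" for t
    using \<open>z0 > 0\<close> tanh_real_bounds[of "\<phi> t"] by (simp add: abs_mult abs_less_iff)
  ultimately show ?thesis
    using curve_is_solution[OF assms(1,2), of UNIV "\<lambda>t. z0 * tanh (\<phi> t)" z0 \<theta>c]
      curve_phase_height_deriv[of z0 k e c] \<open>z0 > 0\<close> unfolding \<phi>_def by simp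
qed

lemma zero_J_point_on_curve:
  fixes k r z a p :: real
  assumes "k > 0" "r > 0" and J: "k^2 + 2 * Hf k r z a p * F3f k r z a p = 0"
  defines "z0 \<equiv> - k / (4 * Hf k r z a p)"
  shows "p \<noteq> 0" "r = curve_r z0 z" "p = curve_pS k z0 (sgn p) z" "a = curve_pR k z0 (sgn p) z"
proof -
  note st = zero_J_state[OF assms(1-3), folded z0_def]
  have "z0 > 0" using st(2) by linarith
  have A: "z0^2 - z^2 > 0" and B: "z0^2 + z^2 > 0"
    using st(2) abs_le_square_iff[of z0 z] \<open>z0 > 0\<close> by (auto simp: add_pos_nonneg)
  have "curve_r z0 z = sqrt (r^2)" unfolding curve_r_def st(3) ..
  then show r: "r = curve_r z0 z" using \<open>r > 0\<close> by simp
  have "\<bar>p\<bar> = sqrt (p^2)" by simp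
  also have "\<dots> = sqrt k * \<bar>(z0^2 - z^2) / (z0^2 + z^2)\<bar>" by (simp add: st(4) real_sqrt_mult)
  also have "\<dots> = sqrt k * ((z0^2 - z^2) / (z0^2 + z^2))" using A B by simp
  finally have abs_p: "\<bar>p\<bar> = sqrt k * ((z0^2 - z^2) / (z0^2 + z^2))" .
  then show "p \<noteq> 0" using \<open>k > 0\<close> A B by auto
  show pS: "p = curve_pS k z0 (sgn p) z"
    using sgn_mult_abs[of p] abs_p by (simp add: curve_pS_def)
  define e where "e = sgn p"
  have A_r: "z0^2 - z^2 = z0 * r^2 / 2" using st(3) \<open>z0 > 0\<close> by simp
  note p_eq = pS[folded e_def, unfolded curve_pS_def A_r]
  have "- z * (e * sqrt k * (z0 * r^2 / 2) / B) / (z0 * r) = - e * sqrt k * z * r / (2 * B)"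
    if "B > 0" for B using \<open>z0 > 0\<close> \<open>r > 0\<close> that by (simp add: field_simps power2_eq_square)
  from this[OF B] show "a = curve_pR k z0 (sgn p) z"
    unfolding st(5) curve_pR_def r[symmetric] e_def[symmetric] unfolding p_eq .
qed

lemma zero_J_solution_on_curve:
  assumes "k > 0" and sol: "is_solution k I r \<theta> z pR pS" and I: "is_interval I" "t0 \<in> I"
    and J: "k^2 + 2 * Hf k (r t0) (z t0) (pR t0) (pS t0) * F3f k (r t0) (z t0) (pR t0) (pS t0) = 0"
  defines "z0 \<equiv> k / (4 * \<bar>Hf k (r t0) (z t0) (pR t0) (pS t0)\<bar>)" and "e \<equiv> sgn (pS t0)"
  shows "z0 > 0" "\<bar>e\<bar> = 1"
    and "\<And>t. t \<in> I \<Longrightarrow> \<bar>z t\<bar> < z0 \<and> r t = curve_r z0 (z t)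
           \<and> pR t = curve_pR k z0 e (z t) \<and> pS t = curve_pS k z0 e (z t)"
proof -
  have "Hf k (r t0) (z t0) (pR t0) (pS t0) < 0"
    using zero_J_state(1)[OF \<open>k > 0\<close> is_solutionD(1)[OF sol I(2)] J] .
  then have state: "k^2 + 2 * Hf k (r t) (z t) (pR t) (pS t) * F3f k (r t) (z t) (pR t) (pS t) = 0"
    "z0 = - k / (4 * Hf k (r t) (z t) (pR t) (pS t))" "r t > 0" if "t \<in> I" for t
    using J is_solution_first_integrals[OF sol I that] is_solutionD(1)[OF sol that]
    by (simp_all add: z0_def)
  have on_curve: "pS t \<noteq> 0 \<and> \<bar>z t\<bar> < z0 \<and> r t = curve_r z0 (z t)
      \<and> pR t = curve_pR k z0 (sgn (pS t)) (z t) \<and> pS t = curve_pS k z0 (sgn (pS t)) (z t)"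
    if "t \<in> I" for t
    using zero_J_point_on_curve[OF \<open>k > 0\<close> state(3,1)[OF that]]
      zero_J_state(2)[OF \<open>k > 0\<close> state(3,1)[OF that]]
    unfolding state(2)[OF that, symmetric] by blast
  show "z0 > 0" using on_curve[OF I(2)] abs_ge_zero[of "z t0"] by linarith
  show "\<bar>e\<bar> = 1" using on_curve[OF I(2)] by (simp add: e_def sgn_if)
  have "continuous_on I pS"
    using is_solutionD(6)[OF sol] by (meson DERIV_isCont continuous_at_imp_continuous_on)
  then have "sgn (pS t) = e" if "t \<in> I" for t
    unfolding e_def using continuous_nonvanishing_sgn_eq[of I pS t0 t] I on_curve that
    by (simp add: is_interval_connected_1)
  with on_curve show "\<bar>z t\<bar> < z0 \<and> r t = curve_r z0 (z t)
      \<and> pR t = curve_pR k z0 e (z t) \<and> pS t = curve_pS k z0 e (z t)"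
    if "t \<in> I" for t using that by metis
qed

lemma curve_phase_speed:
  assumes "\<bar>z\<bar> < z0"
  shows "(1 + (z / z0)^2) * (curve_pS k z0 e z / (curve_r z0 z)^2) = e * sqrt k / (2 * z0)"
proof -
  have "z0 > 0" "z0^2 - z^2 > 0" "z0^2 + z^2 > 0"
    using assms abs_le_square_iff[of z0 z] by (auto simp: add_pos_nonneg)
  have one_plus: "1 + (z / z0)^2 = (z0^2 + z^2) / z0^2" using \<open>z0 > 0\<close> by (simp add: field_simps)
  have "B / z0^2 * (e * sqrt k * A / B / (2 * A / z0)) = e * sqrt k / (2 * z0)"
    if "A > 0" "B > 0" for A B using \<open>z0 > 0\<close> that by (simp add: field_simps power2_eq_square)
  from this[OF \<open>z0^2 - z^2 > 0\<close> \<open>z0^2 + z^2 > 0\<close>]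
  show ?thesis unfolding curve_r_sq[OF assms] curve_pS_def one_plus .
qed

lemma on_curve_solution_phase:
  assumes sol: "is_solution k I r \<theta> z pR pS" and I: "is_interval I" "t0 \<in> I"
    and curve: "\<And>t. t \<in> I \<Longrightarrow> \<bar>z t\<bar> < z0 \<and> r t = curve_r z0 (z t) \<and> pS t = curve_pS k z0 e (z t)"
  obtains c \<theta>c where
    "\<And>t. t \<in> I \<Longrightarrow> z t = z0 * tanh (curve_phase k z0 e c t) \<and> \<theta> t = \<theta>c + curve_phase k z0 e c t"
proof -
  define \<psi> where "\<psi> t = artanh (z t / z0)" for t
  define v where "v = e * sqrt k / (2 * z0)"
  have z0: "z0 > 0" using curve[OF I(2)] by linarith
  have tanh_\<psi>: "tanh (\<psi> t) = z t / z0" if "t \<in> I" for t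
    unfolding \<psi>_def using curve[OF that] z0 by (intro tanh_artanh_real) (simp add: abs_div)
  have d\<psi>: "(\<psi> has_real_derivative pS t / (r t)^2) (at t)" if "t \<in> I" for t
    using curve_theta_deriv[of z t z0 k e 0] curve[OF that] is_solutionD(4)[OF sol that]
    by (simp add: \<psi>_def[abs_def])
  have theta_offset: "\<theta> t - \<psi> t = \<theta> t0 - \<psi> t0" if "t \<in> I" for t
  proof (rule interval_deriv_zero_eq[OF I(1) _ I(2) that])
    fix s assume "s \<in> I"
    from DERIV_diff[OF is_solutionD(3)[OF sol this] d\<psi>[OF this]]
    show "((\<lambda>t. \<theta> t - \<psi> t) has_real_derivative 0) (at s)" by simp
  qed
  have time_law: "time_of_phase (\<psi> t) - v * t = time_of_phase (\<psi> t0) - v * t0" if "t \<in> I" for t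
  proof (rule interval_deriv_zero_eq[OF I(1) _ I(2) that])
    fix s assume "s \<in> I"
    have "(1 + (tanh (\<psi> s))^2) * (pS s / (r s)^2) = v"
      using curve_phase_speed[of "z s" z0 k e] curve[OF \<open>s \<in> I\<close>] tanh_\<psi>[OF \<open>s \<in> I\<close>]
      by (simp add: v_def)
    with DERIV_diff[OF DERIV_chain2[OF time_of_phase_deriv d\<psi>[OF \<open>s \<in> I\<close>]] DERIV_cmult_Id[of v]]
    show "((\<lambda>t. time_of_phase (\<psi> t) - v * t) has_real_derivative 0) (at s)" by simp
  qed
  have "\<psi> t = curve_phase k z0 e (time_of_phase (\<psi> t0) - v * t0) t" if "t \<in> I" for t
  proof -
    have "\<psi> t = phase_of_time (time_of_phase (\<psi> t))" by simp
    also have "time_of_phase (\<psi> t) = v * t + (time_of_phase (\<psi> t0) - v * t0)"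
      using time_law[OF that] by (simp add: algebra_simps)
    finally show ?thesis by (simp add: curve_phase_def v_def)
  qed
  with theta_offset tanh_\<psi> z0 show ?thesis
    by (intro that[of "time_of_phase (\<psi> t0) - v * t0" "\<theta> t0 - \<psi> t0"]) force
qed

lemma curve_phase_signed_asymptotics:
  fixes c :: real
  assumes "k > 0" "z0 > 0" "\<bar>e\<bar> = 1"
  defines "\<psi> \<equiv> \<lambda>t. e * curve_phase k z0 e c t"
  shows "strict_mono \<psi>" "filterlim \<psi> at_top at_top" "filterlim \<psi> at_bot at_bot"
proof -
  define v where "v = sqrt k / (2 * z0)"
  have "v > 0" using assms(1,2) by (simp add: v_def)
  have e2: "e * e = 1" using assms(3) by (auto simp: abs_if split: if_splits)
  have \<psi>: "\<psi> t = e * phase_of_time (e * (v * t + e * c))" for t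
    by (simp add: \<psi>_def curve_phase_def v_def algebra_simps e2)
  have bounds: "v * t + e * c - 1 < 2 * \<psi> t \<and> 2 * \<psi> t < v * t + e * c + 1" for t
    using phase_of_time_bounds[of "e * (v * t + e * c)"] assms(3)
    by (auto simp: \<psi> abs_if algebra_simps e2 split: if_splits)
  have "v / 2 * t + (e * c - 1) / 2 \<le> \<psi> t" "\<psi> t \<le> v / 2 * t + (e * c + 1) / 2" for t
    using bounds[of t] by (simp_all add: field_simps)
  then show "filterlim \<psi> at_top at_top" "filterlim \<psi> at_bot at_bot"
    using \<open>v > 0\<close> filterlim_at_top_linear_lower_bound filterlim_at_bot_linear_upper_bound
    by (metis half_gt_zero)+
  show "strict_mono \<psi>"
  proof (rule strict_monoI)
    fix s t :: real assume "s < t"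
    then have "v * s < v * t" using \<open>v > 0\<close> by simp
    then show "\<psi> s < \<psi> t"
      using assms(3) strict_monoD[OF phase_of_time_strict_mono]
      by (auto simp: \<psi> abs_if split: if_splits)
  qed
qed

lemma tanh_scaled_asymptotics:
  fixes \<psi> :: "real \<Rightarrow> real"
  assumes "z0 > 0" "strict_mono \<psi>" "filterlim \<psi> at_top at_top" "filterlim \<psi> at_bot at_bot"
  shows "strict_mono (\<lambda>t. z0 * tanh (\<psi> t))"
    "((\<lambda>t. z0 * tanh (\<psi> t)) \<longlongrightarrow> z0) at_top" "((\<lambda>t. z0 * tanh (\<psi> t)) \<longlongrightarrow> - z0) at_bot"
proof -
  show "strict_mono (\<lambda>t. z0 * tanh (\<psi> t))"
    using assms(1,2) tanh_real_strict_mono by (simp add: strict_mono_def)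
  show "((\<lambda>t. z0 * tanh (\<psi> t)) \<longlongrightarrow> z0) at_top"
    using tendsto_mult_left[OF filterlim_compose[OF tanh_real_at_top assms(3)], of z0] by simp
  show "((\<lambda>t. z0 * tanh (\<psi> t)) \<longlongrightarrow> - z0) at_bot"
    using tendsto_mult_left[OF filterlim_compose[OF tanh_real_at_bot assms(4)], of z0] by simp
qed

lemma curve_phase_monotone_limits:
  assumes "k > 0" "z0 > 0" "\<bar>e\<bar> = 1"
    and z: "z = (\<lambda>t. z0 * tanh (curve_phase k z0 e c t))"
    and \<theta>: "\<theta> = (\<lambda>t. \<theta>c + curve_phase k z0 e c t)"
  shows "(strict_mono z \<and> strict_mono \<theta> \<and> (z \<longlongrightarrow> z0) at_top \<and> (z \<longlongrightarrow> - z0) at_bot)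
       \<or> (strict_mono (\<lambda>t. - z t) \<and> strict_mono (\<lambda>t. - \<theta> t)
          \<and> (z \<longlongrightarrow> - z0) at_top \<and> (z \<longlongrightarrow> z0) at_bot)"
proof -
  define \<psi> where "\<psi> t = e * curve_phase k z0 e c t" for t
  note signed = curve_phase_signed_asymptotics[OF assms(1-3), of c, folded \<psi>_def[abs_def]]
  note scaled = tanh_scaled_asymptotics[OF \<open>z0 > 0\<close> signed]
  from \<open>\<bar>e\<bar> = 1\<close> consider "e = 1" | "e = -1" by linarith
  then show ?thesis
  proof cases
    case 1
    then have "z = (\<lambda>t. z0 * tanh (\<psi> t))" "\<theta> = (\<lambda>t. \<theta>c + \<psi> t)" by (simp_all add: z \<theta> \<psi>_def)
    then show ?thesis using scaled signed(1) by (simp add: strict_mono_def)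
  next
    case 2
    then have minus_z: "(\<lambda>t. - z t) = (\<lambda>t. z0 * tanh (\<psi> t))"
      and "(\<lambda>t. - \<theta> t) = (\<lambda>t. - \<theta>c + \<psi> t)" by (simp_all add: z \<theta> \<psi>_def)
    then have "strict_mono (\<lambda>t. - z t)" "strict_mono (\<lambda>t. - \<theta> t)"
      using scaled(1) signed(1) by (simp_all add: strict_mono_def)
    moreover have "(z \<longlongrightarrow> - z0) at_top" "(z \<longlongrightarrow> - (- z0)) at_bot"
      using scaled(2,3) unfolding tendsto_minus_cancel_left minus_z .
    ultimately show ?thesis by simp
  qed
qed

lemma curve_phase_theta_eq_ln:
  assumes "k > 0" "z0 > 0" "\<bar>e\<bar> = 1"
    and z: "z = (\<lambda>t. z0 * tanh (curve_phase k z0 e c t))"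
    and \<theta>: "\<theta> = (\<lambda>t. \<theta>c + curve_phase k z0 e c t)"
  shows "\<exists>t1. z t1 = 0 \<and> (\<forall>t. \<theta> t = ln ((z0 + z t) / (z0 - z t)) / 2 + \<theta> t1)"
proof (intro exI conjI allI)
  define t1 where "t1 = - c / (e * sqrt k / (2 * z0))"
  have "curve_phase k z0 e c t1 = 0" using assms(1-3) by (auto simp: curve_phase_def t1_def)
  then show "z t1 = 0" by (simp add: z)
  fix t
  have "\<bar>z t\<bar> < z0" using \<open>z0 > 0\<close> tanh_real_bounds[of "curve_phase k z0 e c t"]
    by (simp add: z abs_mult abs_less_iff)
  with \<open>curve_phase k z0 e c t1 = 0\<close> show "\<theta> t = ln ((z0 + z t) / (z0 - z t)) / 2 + \<theta> t1"
    using \<open>z0 > 0\<close> by (simp add: \<theta> z artanh_tanh_real flip: artanh_div_eq_ln)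
qed

lemma maximal_solution_eq_UNIV:
  assumes "maximal_solution k I r \<theta> z pR pS" "is_solution k UNIV r' \<theta>' z' pR' pS'"
    and "\<And>t. t \<in> I \<Longrightarrow> r' t = r t \<and> \<theta>' t = \<theta> t \<and> z' t = z t \<and> pR' t = pR t \<and> pS' t = pS t"
  shows "I = UNIV"
  using assms unfolding maximal_solution_def by (metis is_interval_univ open_UNIV top_greatest)

theorem theorem6:
  fixes k :: real and I :: "real set" and r \<theta> z pR pS :: "real \<Rightarrow> real" and t0 :: real
  assumes "k > 0"
    and "maximal_solution k I r \<theta> z pR pS"
    and "t0 \<in> I"
    and "sqrt (k^2 + 2 * Hf k (r t0) (z t0) (pR t0) (pS t0) * F3f k (r t0) (z t0) (pR t0) (pS t0)) = 0"
  shows "let z0 = k / (4 * \<bar>Hf k (r t0) (z t0) (pR t0) (pS t0)\<bar>) in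
     I = UNIV
     \<and> (\<forall>t. \<bar>z t\<bar> < z0 \<and> r t = sqrt (2 * (z0^2 - (z t)^2) / z0))
     \<and> (\<exists>t1. z t1 = 0 \<and> (\<forall>t. \<theta> t = ln ((z0 + z t) / (z0 - z t)) / 2 + \<theta> t1))
     \<and> ((strict_mono z \<and> strict_mono \<theta>
           \<and> (z \<longlongrightarrow> z0) at_top \<and> (z \<longlongrightarrow> - z0) at_bot)
        \<or> (strict_mono (\<lambda>t. - z t) \<and> strict_mono (\<lambda>t. - \<theta> t)
           \<and> (z \<longlongrightarrow> - z0) at_top \<and> (z \<longlongrightarrow> z0) at_bot))"
proof -
  have sol: "is_solution k I r \<theta> z pR pS" and I: "is_interval I"
    using assms(2) by (simp_all add: maximal_solution_def)
  have J: "k^2 + 2 * Hf k (r t0) (z t0) (pR t0) (pS t0) * F3f k (r t0) (z t0) (pR t0) (pS t0) = 0"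
    using assms(4) by simp
  define z0 e where "z0 = k / (4 * \<bar>Hf k (r t0) (z t0) (pR t0) (pS t0)\<bar>)" and "e = sgn (pS t0)"
  note curve = zero_J_solution_on_curve[OF \<open>k > 0\<close> sol I \<open>t0 \<in> I\<close> J, folded z0_def e_def]
  obtain c \<theta>c where phase:
    "\<And>t. t \<in> I \<Longrightarrow> z t = z0 * tanh (curve_phase k z0 e c t) \<and> \<theta> t = \<theta>c + curve_phase k z0 e c t"
    using on_curve_solution_phase[OF sol I \<open>t0 \<in> I\<close>] curve(3) by metis
  have "I = UNIV"
    using maximal_solution_eq_UNIV[OF assms(2) curve_phase_is_solution[OF \<open>k > 0\<close> curve(2,1)]]
      phase curve(3) by auto
  then have z: "z = (\<lambda>t. z0 * tanh (curve_phase k z0 e c t))"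
    and \<theta>: "\<theta> = (\<lambda>t. \<theta>c + curve_phase k z0 e c t)" using phase by auto
  show ?thesis
    using \<open>I = UNIV\<close> curve(3) curve_phase_theta_eq_ln[OF \<open>k > 0\<close> curve(1,2) z \<theta>]
      curve_phase_monotone_limits[OF \<open>k > 0\<close> curve(1,2) z \<theta>]
    unfolding Let_def z0_def[symmetric] by (auto simp: curve_r_def)
qed

end
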